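(* Let $D$ be an instance all of whose tuples are endogenous ($D^n=D$), let $\mathcal{Q}$ be a monotone query, and let $\bar a\in\mathcal{Q}(D)$. A tuple $t$ is a most responsible actual cause for $\bar a$ if and only if there is $D'\subseteq D$ with $t\in(D\smallsetminus D')\subseteq D^n$ and $(D,D',\bar a)\in\mathcal{MSSEP}^{c}(\mathcal{Q})$.
   Context: A query $\mathcal{Q}$ is monotone if $D_1\subseteq D_2$ implies $\mathcal{Q}(D_1)\subseteq\mathcal{Q}(D_2)$; $D\models\mathcal{Q}(\bar a)$ means $\bar a\in\mathcal{Q}(D)$. A tuple $\tau\in D^n$ is an actual cause for $\bar a$ if there is $\Gamma\subseteq D^n$ (contingency set) with $D\smallsetminus\Gamma\models\mathcal{Q}(\bar a)$ and $D\smallsetminus(\Gamma\cup\{\tau\})\not\models\mathcal{Q}(\bar a)$. The responsibility of an actual cause $\tau$ is $1/(|\Gamma|+1)$ with $\Gamma$ a minimum-size contingency set for $\tau$; a most responsible actual cause is an actual cause of maximum responsibility. $\mathcal{MSSEP}^{c}(\mathcal{Q})$ is the set of triples $(D,D',\bar a)$ with $\bar a\in\mathcal{Q}(D)$, $D'\subseteq D$, $\bar a\notin\mathcal{Q}(D')$, and $D'$ of maximum cardinality among subsets of $D$ with this last property. *)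

theory Defs
  imports Complex_Main
begin

text \<open>Instances are finite sets of tuples of type 'a; a query maps an instance
  to its set of answers (of type 'b). Dn is the set of endogenous tuples.\<close>

definition monotone_query :: "('a set \<Rightarrow> 'b set) \<Rightarrow> bool" where
  "monotone_query Q \<longleftrightarrow> (\<forall>D1 D2. D1 \<subseteq> D2 \<longrightarrow> Q D1 \<subseteq> Q D2)"

definition is_contingency ::
  "('a set \<Rightarrow> 'b set) \<Rightarrow> 'a set \<Rightarrow> 'a set \<Rightarrow> 'b \<Rightarrow> 'a \<Rightarrow> 'a set \<Rightarrow> bool" where
  "is_contingency Q D Dn a t \<Gamma> \<longleftrightarrow>
     \<Gamma> \<subseteq> Dn \<and> a \<in> Q (D - \<Gamma>) \<and> a \<notin> Q (D - (\<Gamma> \<union> {t}))"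

definition actual_cause ::
  "('a set \<Rightarrow> 'b set) \<Rightarrow> 'a set \<Rightarrow> 'a set \<Rightarrow> 'b \<Rightarrow> 'a \<Rightarrow> bool" where
  "actual_cause Q D Dn a t \<longleftrightarrow> t \<in> Dn \<and> (\<exists>\<Gamma>. is_contingency Q D Dn a t \<Gamma>)"

definition responsibility ::
  "('a set \<Rightarrow> 'b set) \<Rightarrow> 'a set \<Rightarrow> 'a set \<Rightarrow> 'b \<Rightarrow> 'a \<Rightarrow> real" where
  "responsibility Q D Dn a t =
     (if actual_cause Q D Dn a t
      then 1 / (real (LEAST k. \<exists>\<Gamma>. is_contingency Q D Dn a t \<Gamma> \<and> card \<Gamma> = k) + 1)
      else 0)"

definition most_responsible_cause ::
  "('a set \<Rightarrow> 'b set) \<Rightarrow> 'a set \<Rightarrow> 'a set \<Rightarrow> 'b \<Rightarrow> 'a \<Rightarrow> bool" where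
  "most_responsible_cause Q D Dn a t \<longleftrightarrow>
     actual_cause Q D Dn a t \<and>
     (\<forall>t'. actual_cause Q D Dn a t' \<longrightarrow> responsibility Q D Dn a t' \<le> responsibility Q D Dn a t)"

definition MSSEP_c :: "('a set \<Rightarrow> 'b set) \<Rightarrow> ('a set \<times> 'a set \<times> 'b) set" where
  "MSSEP_c Q = {(D, D', a). a \<in> Q D \<and> D' \<subseteq> D \<and> a \<notin> Q D' \<and>
     (\<forall>D''. D'' \<subseteq> D \<and> a \<notin> Q D'' \<longrightarrow> card D'' \<le> card D')}"

end

theory Submission
  imports Defs
begin

text \<open>With every tuple endogenous, a contingency set \<Gamma> for t corresponds to the non-answer
  subinstance D - (\<Gamma> \<union> {t}), whose cardinality is card D - card \<Gamma> - 1. A smallest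
  contingency set therefore belongs to a largest non-answer subinstance, and conversely
  every tuple outside a maximum-size non-answer subinstance D' has D - D' - {t} as a
  contingency set, since by maximality adding any single tuple back to D' restores the
  answer.\<close>

definition min_contingency_size ::
  "('a set \<Rightarrow> 'b set) \<Rightarrow> 'a set \<Rightarrow> 'a set \<Rightarrow> 'b \<Rightarrow> 'a \<Rightarrow> nat" where
  "min_contingency_size Q D Dn a t = (LEAST k. \<exists>\<Gamma>. is_contingency Q D Dn a t \<Gamma> \<and> card \<Gamma> = k)"

lemma min_contingency_size_le:
  assumes "is_contingency Q D Dn a t \<Gamma>"
  shows "min_contingency_size Q D Dn a t \<le> card \<Gamma>"
  unfolding min_contingency_size_def using assms by (intro Least_le) blast

lemma min_contingency_exists:
  assumes "actual_cause Q D Dn a t"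
  obtains \<Gamma> where "is_contingency Q D Dn a t \<Gamma>" "card \<Gamma> = min_contingency_size Q D Dn a t"
proof -
  from assms have "\<exists>k \<Gamma>. is_contingency Q D Dn a t \<Gamma> \<and> card \<Gamma> = k"
    unfolding actual_cause_def by blast
  then have "\<exists>\<Gamma>. is_contingency Q D Dn a t \<Gamma> \<and> card \<Gamma> = min_contingency_size Q D Dn a t"
    unfolding min_contingency_size_def by (rule LeastI_ex)
  then show thesis using that by blast
qed

lemma responsibility_le_iff:
  assumes "actual_cause Q D Dn a s" and "actual_cause Q D Dn a t"
  shows "responsibility Q D Dn a s \<le> responsibility Q D Dn a t \<longleftrightarrow>
         min_contingency_size Q D Dn a t \<le> min_contingency_size Q D Dn a s"
  using assms unfolding responsibility_def min_contingency_size_def[symmetric]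
  by (simp add: divide_le_eq le_divide_eq)

lemma contingency_card:
  assumes "finite D" and "t \<in> D" and "is_contingency Q D D a t \<Gamma>"
  shows "card (D - (\<Gamma> \<union> {t})) + card \<Gamma> + 1 = card D"
proof -
  have sub: "\<Gamma> \<subseteq> D" and answer: "a \<in> Q (D - \<Gamma>)" "a \<notin> Q (D - (\<Gamma> \<union> {t}))"
    using assms(3) unfolding is_contingency_def by auto
  have "t \<notin> \<Gamma>"
  proof
    assume "t \<in> \<Gamma>"
    then have "D - (\<Gamma> \<union> {t}) = D - \<Gamma>" by blast
    with answer show False by simp
  qed
  moreover have "finite \<Gamma>" using sub assms(1) by (rule finite_subset)
  ultimately have "card (\<Gamma> \<union> {t}) = card \<Gamma> + 1" by simp
  moreover have "card (D - (\<Gamma> \<union> {t})) = card D - card (\<Gamma> \<union> {t})"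
    using sub assms(2) \<open>finite \<Gamma>\<close> by (intro card_Diff_subset) auto
  moreover have "card (\<Gamma> \<union> {t}) \<le> card D"
    using sub assms(1,2) by (intro card_mono) auto
  ultimately show ?thesis by arith
qed

lemma mem_MSSEP_c_iff:
  "(D, D', a) \<in> MSSEP_c Q \<longleftrightarrow> a \<in> Q D \<and> D' \<subseteq> D \<and> a \<notin> Q D' \<and>
     (\<forall>X. X \<subseteq> D \<and> a \<notin> Q X \<longrightarrow> card X \<le> card D')"
  by (simp add: MSSEP_c_def)

lemma MSSEP_c_insert:
  assumes "finite D" and "(D, D', a) \<in> MSSEP_c Q" and "s \<in> D - D'"
  shows "a \<in> Q (insert s D')"
proof (rule ccontr)
  assume "a \<notin> Q (insert s D')"
  with assms(2,3) have "card (insert s D') \<le> card D'"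
    unfolding mem_MSSEP_c_iff by auto
  moreover have "finite D'"
    using assms(2) finite_subset[OF _ assms(1)] unfolding mem_MSSEP_c_iff by auto
  ultimately show False using assms(3) by simp
qed

lemma MSSEP_c_contingency:
  assumes "finite D" and "(D, D', a) \<in> MSSEP_c Q" and "s \<in> D - D'"
  shows "is_contingency Q D D a s (D - D' - {s})"
    and "card (D - D' - {s}) + card D' + 1 = card D"
proof -
  have sub: "D' \<subseteq> D" and "a \<notin> Q D'" using assms(2) unfolding mem_MSSEP_c_iff by auto
  moreover have "D - (D - D' - {s}) = insert s D'" and "D - ((D - D' - {s}) \<union> {s}) = D'"
    using sub assms(3) by auto
  ultimately show "is_contingency Q D D a s (D - D' - {s})"
    unfolding is_contingency_def using MSSEP_c_insert[OF assms] by auto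
  have "card (D - D') = card D - card D'"
    using finite_subset[OF sub assms(1)] sub by (rule card_Diff_subset)
  moreover have "card D' < card D"
    using sub assms(1,3) by (intro psubset_card_mono) auto
  ultimately show "card (D - D' - {s}) + card D' + 1 = card D"
    using assms(1,3) by simp
qed

lemma MSSEP_c_card_bound:
  assumes "finite D" and "(D, D', a) \<in> MSSEP_c Q"
    and "t \<in> D" and "is_contingency Q D D a t \<Gamma>"
  shows "card D \<le> card \<Gamma> + card D' + 1"
proof -
  have "a \<notin> Q (D - (\<Gamma> \<union> {t}))" using assms(4) unfolding is_contingency_def by simp
  then have "card (D - (\<Gamma> \<union> {t})) \<le> card D'" using assms(2) unfolding mem_MSSEP_c_iff by auto
  with contingency_card[OF assms(1,3,4)] show ?thesis by simp
qed

lemma MSSEP_c_exists: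
  assumes "finite D" and "a \<in> Q D" and "D'' \<subseteq> D" and "a \<notin> Q D''"
  obtains D' where "(D, D', a) \<in> MSSEP_c Q"
proof -
  have bound: "\<forall>X. X \<subseteq> D \<and> a \<notin> Q X \<longrightarrow> card X < Suc (card D)"
    using card_mono[OF assms(1)] by (simp add: less_Suc_eq_le)
  obtain D' where "D' \<subseteq> D" and "a \<notin> Q D'"
    and "\<forall>X. X \<subseteq> D \<and> a \<notin> Q X \<longrightarrow> card X \<le> card D'"
    using ex_has_greatest_nat[of "\<lambda>X. X \<subseteq> D \<and> a \<notin> Q X" D'' card, OF _ bound] assms(3,4)
    by blast
  then have "(D, D', a) \<in> MSSEP_c Q" using assms(2) by (simp add: mem_MSSEP_c_iff)
  then show thesis by (rule that)
qed

lemma most_responsible_cause_MSSEP_c: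
  assumes "finite D" and "a \<in> Q D" and most: "most_responsible_cause Q D D a t"
  obtains D' where "t \<in> D - D'" and "(D, D', a) \<in> MSSEP_c Q"
proof -
  let ?k = "min_contingency_size Q D D a"
  have cause: "actual_cause Q D D a t" using most unfolding most_responsible_cause_def by simp
  then have "t \<in> D" unfolding actual_cause_def by simp
  obtain \<Gamma> where \<Gamma>: "is_contingency Q D D a t \<Gamma>" "card \<Gamma> = ?k t"
    using cause by (rule min_contingency_exists)
  have maximal: "card X \<le> card (D - (\<Gamma> \<union> {t}))" if X: "X \<subseteq> D" "a \<notin> Q X" for X
  proof -
    obtain M where M: "(D, M, a) \<in> MSSEP_c Q" using MSSEP_c_exists[OF assms(1,2) X] .
    then have "M \<noteq> D" using assms(2) unfolding mem_MSSEP_c_iff by auto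
    then obtain s where s: "s \<in> D - M" using M unfolding mem_MSSEP_c_iff by blast
    note s_contingency = MSSEP_c_contingency[OF assms(1) M s]
    have "actual_cause Q D D a s" unfolding actual_cause_def using s_contingency(1) s by blast
    then have "?k t \<le> ?k s"
      using most responsibility_le_iff[OF _ cause] unfolding most_responsible_cause_def by blast
    moreover have "?k s \<le> card (D - M - {s})" using s_contingency(1) by (rule min_contingency_size_le)
    moreover have "card X \<le> card M" using M X unfolding mem_MSSEP_c_iff by blast
    ultimately show ?thesis
      using s_contingency(2) contingency_card[OF assms(1) \<open>t \<in> D\<close> \<Gamma>(1)] \<Gamma>(2) by linarith
  qed
  have "t \<in> D - (D - (\<Gamma> \<union> {t}))" using \<open>t \<in> D\<close> by simp
  moreover have "a \<notin> Q (D - (\<Gamma> \<union> {t}))" using \<Gamma>(1) unfolding is_contingency_def by simp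
  with maximal assms(2) have "(D, D - (\<Gamma> \<union> {t}), a) \<in> MSSEP_c Q"
    unfolding mem_MSSEP_c_iff by blast
  ultimately show thesis by (rule that)
qed

lemma MSSEP_c_most_responsible_cause:
  assumes "finite D" and M: "(D, D', a) \<in> MSSEP_c Q" and t: "t \<in> D - D'"
  shows "most_responsible_cause Q D D a t"
proof -
  let ?k = "min_contingency_size Q D D a"
  note t_contingency = MSSEP_c_contingency[OF assms]
  have cause: "actual_cause Q D D a t" unfolding actual_cause_def using t_contingency(1) t by blast
  have "responsibility Q D D a s \<le> responsibility Q D D a t" if s: "actual_cause Q D D a s" for s
  proof -
    obtain \<Gamma> where \<Gamma>: "is_contingency Q D D a s \<Gamma>" "card \<Gamma> = ?k s"
      using s by (rule min_contingency_exists)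
    have "s \<in> D" using s unfolding actual_cause_def by simp
    have "?k t \<le> card (D - D' - {t})" using t_contingency(1) by (rule min_contingency_size_le)
    then have "?k t \<le> ?k s"
      using MSSEP_c_card_bound[OF assms(1) M \<open>s \<in> D\<close> \<Gamma>(1)] t_contingency(2) \<Gamma>(2) by linarith
    then show ?thesis using responsibility_le_iff[OF s cause] by simp
  qed
  then show ?thesis unfolding most_responsible_cause_def using cause by blast
qed

theorem proposition11:
  fixes Q :: "'a set \<Rightarrow> 'b set" and D Dn :: "'a set" and a :: 'b and t :: 'a
  assumes "finite D" and "Dn = D" and "monotone_query Q" and "a \<in> Q D"
  shows "most_responsible_cause Q D Dn a t \<longleftrightarrow>
         (\<exists>D'. D' \<subseteq> D \<and> t \<in> D - D' \<and> D - D' \<subseteq> Dn \<and> (D, D', a) \<in> MSSEP_c Q)"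
  unfolding assms(2)
proof
  assume "most_responsible_cause Q D D a t"
  with assms(1,4) obtain D' where "t \<in> D - D'" and "(D, D', a) \<in> MSSEP_c Q"
    by (rule most_responsible_cause_MSSEP_c)
  then show "\<exists>D'. D' \<subseteq> D \<and> t \<in> D - D' \<and> D - D' \<subseteq> D \<and> (D, D', a) \<in> MSSEP_c Q"
    by (intro exI[of _ D']) (simp add: mem_MSSEP_c_iff)
next
  assume "\<exists>D'. D' \<subseteq> D \<and> t \<in> D - D' \<and> D - D' \<subseteq> D \<and> (D, D', a) \<in> MSSEP_c Q"
  then obtain D' where "(D, D', a) \<in> MSSEP_c Q" and "t \<in> D - D'" by blast
  then show "most_responsible_cause Q D D a t"
    by (rule MSSEP_c_most_responsible_cause[OF assms(1)])
qed

end
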